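(* For a map $F= \left( \begin{bmatrix} f \\ g \end{bmatrix}, \begin{bmatrix} \alpha & \beta \\ \beta^\dagger & \delta \end{bmatrix}, \begin{bmatrix} s \\ t \end{bmatrix} \right): A \to B \otimes C$ in $\mathfrak{G}\left[ (\mathbb{X}, \dagger) \right]_X$, conditionals of $F$ are in bijective correspondence with conditional generators of $\begin{bmatrix} \alpha & \beta \\ \beta^\dagger & \delta \end{bmatrix}$. Explicitly: (i) If $G = \left( \begin{bmatrix} m & k \end{bmatrix}, \eta, u \right)$ is a conditional of $F$ then $m$ is a conditional generator of $\begin{bmatrix} \alpha & \beta \\ \beta^\dagger & \delta \end{bmatrix}$; (ii) If $m$ is a conditional generator of $\begin{bmatrix} \alpha & \beta \\ \beta^\dagger & \delta \end{bmatrix}$, then $G_m = \left( \begin{bmatrix} m & g - m \circ f \end{bmatrix}, \delta - m \circ \beta, t - m\circ s \right)$ is a conditional of $F$; and these constructions are inverses of each other.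
   Context: Let $(\mathbb{X}, \dagger)$ be a dagger additive category (a dagger category enriched in abelian groups with additive dagger and finite biproducts satisfying $\pi_j^\dagger = \iota_j$; maps between biproducts are written as matrices and the dagger acts as conjugate transpose) and fix an object $X$. A map $p$ is $\dagger$-positive if $p = \phi^\dagger \circ \phi$ for some $\phi$. The Gauss construction $\mathfrak{G}\left[ (\mathbb{X}, \dagger) \right]_X$ is the Markov category with the objects of $\mathbb{X}$, maps $A \to B$ the triples $(f,p,x)$ with $f: A \to B$, $p: B \to B$ $\dagger$-positive, $x: X \to B$; identities $\mathsf{Id}_A = (\mathsf{id}_A,0,0)$; composition $(g,q,y) \circ (f,p,x) = (g \circ f, q + g \circ p \circ g^\dagger, y + g \circ x)$; $A \otimes B = A \oplus B$, $(f,p,x) \otimes (g,q,y) = \left(f \oplus g, p \oplus q, \begin{bmatrix} x \\ y \end{bmatrix}\right)$; copy $\mathsf{copy}_A = \left(\begin{bmatrix} \mathsf{id}_A \\ \mathsf{id}_A \end{bmatrix}, 0, 0\right)$, delete $\mathsf{del}_A = (0,0,0): A \to \mathsf{0}$. In $F$, $f: A \to B$, $g: A \to C$, $\alpha: B \to B$, $\beta: C \to B$, $\delta: C \to C$, $s: X \to B$, $t: X \to C$; in $G: B \otimes A \to C$, $m: B \to C$, $k: A \to C$, $\eta: C \to C$, $u: X \to C$. A conditional generator for a $\dagger$-positive map $\begin{bmatrix} \alpha & \beta \\ \beta^\dagger & \delta \end{bmatrix}: B \oplus C \to B \oplus C$ is a map $m: B \to C$ such that (i) $m \circ \alpha = \beta^\dagger$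 and (ii) $\delta - m \circ \beta$ is $\dagger$-positive. A map $G: B \otimes A \to C$ is a conditional of $F: A \to B \otimes C$ if $(\mathsf{Id}_B \otimes G) \circ (\mathsf{copy}_B \otimes \mathsf{Id}_A) \circ (\mathsf{Id}_B \otimes \mathsf{del}_C \otimes \mathsf{Id}_A) \circ (F \otimes \mathsf{Id}_A) \circ \mathsf{copy}_A = F$. *)

theory Defs
  imports Main
begin

record ('o,'m) dagcat =
  dDom  :: "'m \<Rightarrow> 'o"
  dCod  :: "'m \<Rightarrow> 'o"
  dCmp  :: "'m \<Rightarrow> 'm \<Rightarrow> 'm"      (* dCmp g f = g \<circ> f *)
  dId   :: "'o \<Rightarrow> 'm"
  dDag  :: "'m \<Rightarrow> 'm"
  dAdd  :: "'m \<Rightarrow> 'm \<Rightarrow> 'm"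
  dNeg  :: "'m \<Rightarrow> 'm"
  dZero :: "'o \<Rightarrow> 'o \<Rightarrow> 'm"       (* dZero A B : A \<rightarrow> B *)
  dBip  :: "'o \<Rightarrow> 'o \<Rightarrow> 'o"
  dIn1  :: "'o \<Rightarrow> 'o \<Rightarrow> 'm"
  dIn2  :: "'o \<Rightarrow> 'o \<Rightarrow> 'm"
  dPr1  :: "'o \<Rightarrow> 'o \<Rightarrow> 'm"
  dPr2  :: "'o \<Rightarrow> 'o \<Rightarrow> 'm"
  dZob  :: "'o"

definition hom :: "('o,'m,'x) dagcat_scheme \<Rightarrow> 'o \<Rightarrow> 'o \<Rightarrow> 'm set" where
  "hom K A B = {f. dDom K f = A \<and> dCod K f = B}"

locale dagger_additive_cat =
  fixes K :: "('o,'m) dagcat"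
  assumes id_dom: "dDom K (dId K A) = A"
    and id_cod: "dCod K (dId K A) = A"
    and cmp_dom: "dDom K g = dCod K f \<Longrightarrow> dDom K (dCmp K g f) = dDom K f"
    and cmp_cod: "dDom K g = dCod K f \<Longrightarrow> dCod K (dCmp K g f) = dCod K g"
    and id_left: "dCmp K (dId K (dCod K f)) f = f"
    and id_right: "dCmp K f (dId K (dDom K f)) = f"
    and cmp_assoc: "dDom K h = dCod K g \<Longrightarrow> dDom K g = dCod K f \<Longrightarrow>
                    dCmp K h (dCmp K g f) = dCmp K (dCmp K h g) f"
    and dag_dom: "dDom K (dDag K f) = dCod K f"
    and dag_cod: "dCod K (dDag K f) = dDom K f"
    and dag_invol: "dDag K (dDag K f) = f"
    and dag_id: "dDag K (dId K A) = dId K A"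
    and dag_cmp: "dDom K g = dCod K f \<Longrightarrow>
                  dDag K (dCmp K g f) = dCmp K (dDag K f) (dDag K g)"
    and add_hom: "f \<in> hom K A B \<Longrightarrow> g \<in> hom K A B \<Longrightarrow> dAdd K f g \<in> hom K A B"
    and add_comm: "f \<in> hom K A B \<Longrightarrow> g \<in> hom K A B \<Longrightarrow> dAdd K f g = dAdd K g f"
    and add_assoc: "f \<in> hom K A B \<Longrightarrow> g \<in> hom K A B \<Longrightarrow> h \<in> hom K A B \<Longrightarrow>
                    dAdd K (dAdd K f g) h = dAdd K f (dAdd K g h)"
    and zero_hom: "dZero K A B \<in> hom K A B"
    and add_zero: "f \<in> hom K A B \<Longrightarrow> dAdd K f (dZero K A B) = f"
    and neg_hom: "f \<in> hom K A B \<Longrightarrow> dNeg K f \<in> hom K A B"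
    and add_neg: "f \<in> hom K A B \<Longrightarrow> dAdd K f (dNeg K f) = dZero K A B"
    and cmp_add_left: "f \<in> hom K A B \<Longrightarrow> g \<in> hom K A B \<Longrightarrow> dDom K h = B \<Longrightarrow>
                    dCmp K h (dAdd K f g) = dAdd K (dCmp K h f) (dCmp K h g)"
    and cmp_add_right: "f \<in> hom K A B \<Longrightarrow> g \<in> hom K A B \<Longrightarrow> dCod K h = A \<Longrightarrow>
                    dCmp K (dAdd K f g) h = dAdd K (dCmp K f h) (dCmp K g h)"
    and dag_add: "f \<in> hom K A B \<Longrightarrow> g \<in> hom K A B \<Longrightarrow>
                    dDag K (dAdd K f g) = dAdd K (dDag K f) (dDag K g)"
    and in1_hom: "dIn1 K A B \<in> hom K A (dBip K A B)"
    and in2_hom: "dIn2 K A B \<in> hom K B (dBip K A B)"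
    and pr1_hom: "dPr1 K A B \<in> hom K (dBip K A B) A"
    and pr2_hom: "dPr2 K A B \<in> hom K (dBip K A B) B"
    and pr1_in1: "dCmp K (dPr1 K A B) (dIn1 K A B) = dId K A"
    and pr2_in2: "dCmp K (dPr2 K A B) (dIn2 K A B) = dId K B"
    and pr1_in2: "dCmp K (dPr1 K A B) (dIn2 K A B) = dZero K B A"
    and pr2_in1: "dCmp K (dPr2 K A B) (dIn1 K A B) = dZero K A B"
    and in_pr_sum: "dAdd K (dCmp K (dIn1 K A B) (dPr1 K A B)) (dCmp K (dIn2 K A B) (dPr2 K A B))
                    = dId K (dBip K A B)"
    and dag_pr1: "dDag K (dPr1 K A B) = dIn1 K A B"
    and dag_pr2: "dDag K (dPr2 K A B) = dIn2 K A B"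
    and zero_obj: "dId K (dZob K) = dZero K (dZob K) (dZob K)"

definition sub :: "('o,'m) dagcat \<Rightarrow> 'm \<Rightarrow> 'm \<Rightarrow> 'm" where
  "sub K f g = dAdd K f (dNeg K g)"

definition positive :: "('o,'m) dagcat \<Rightarrow> 'm \<Rightarrow> bool" where
  "positive K p \<longleftrightarrow> (\<exists>\<phi>. p = dCmp K (dDag K \<phi>) \<phi>)"

definition col :: "('o,'m) dagcat \<Rightarrow> 'm \<Rightarrow> 'm \<Rightarrow> 'm" where
  "col K x y = dAdd K (dCmp K (dIn1 K (dCod K x) (dCod K y)) x)
                      (dCmp K (dIn2 K (dCod K x) (dCod K y)) y)"

definition row :: "('o,'m) dagcat \<Rightarrow> 'm \<Rightarrow> 'm \<Rightarrow> 'm" where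
  "row K m k = dAdd K (dCmp K m (dPr1 K (dDom K m) (dDom K k)))
                      (dCmp K k (dPr2 K (dDom K m) (dDom K k)))"

definition blk :: "('o,'m) dagcat \<Rightarrow> 'm \<Rightarrow> 'm \<Rightarrow> 'm \<Rightarrow> 'm \<Rightarrow> 'm" where
  "blk K a b c d = col K (row K a b) (row K c d)"

definition dsum :: "('o,'m) dagcat \<Rightarrow> 'm \<Rightarrow> 'm \<Rightarrow> 'm" where
  "dsum K f g = dAdd K
     (dCmp K (dIn1 K (dCod K f) (dCod K g)) (dCmp K f (dPr1 K (dDom K f) (dDom K g))))
     (dCmp K (dIn2 K (dCod K f) (dCod K g)) (dCmp K g (dPr2 K (dDom K f) (dDom K g))))"

definition assoc_map :: "('o,'m) dagcat \<Rightarrow> 'o \<Rightarrow> 'o \<Rightarrow> 'o \<Rightarrow> 'm" where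
  "assoc_map K P Q R =
     dAdd K (dAdd K
       (dCmp K (dIn1 K P (dBip K Q R)) (dCmp K (dPr1 K P Q) (dPr1 K (dBip K P Q) R)))
       (dCmp K (dIn2 K P (dBip K Q R)) (dCmp K (dIn1 K Q R)
             (dCmp K (dPr2 K P Q) (dPr1 K (dBip K P Q) R)))))
       (dCmp K (dIn2 K P (dBip K Q R)) (dCmp K (dIn2 K Q R) (dPr2 K (dBip K P Q) R)))"

type_synonym 'm gmap = "'m \<times> 'm \<times> 'm"

definition ghom :: "('o,'m) dagcat \<Rightarrow> 'o \<Rightarrow> 'o \<Rightarrow> 'o \<Rightarrow> 'm gmap \<Rightarrow> bool" where
  "ghom K X A B F = (case F of (f, p, x) \<Rightarrow>
      f \<in> hom K A B \<and> p \<in> hom K B B \<and> positive K p \<and> x \<in> hom K X B)"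

definition gid :: "('o,'m) dagcat \<Rightarrow> 'o \<Rightarrow> 'o \<Rightarrow> 'm gmap" where
  "gid K X A = (dId K A, dZero K A A, dZero K X A)"

definition gcomp :: "('o,'m) dagcat \<Rightarrow> 'm gmap \<Rightarrow> 'm gmap \<Rightarrow> 'm gmap" where
  "gcomp K G F = (case G of (g, q, y) \<Rightarrow> case F of (f, p, x) \<Rightarrow>
      (dCmp K g f, dAdd K q (dCmp K g (dCmp K p (dDag K g))), dAdd K y (dCmp K g x)))"

definition gtensor :: "('o,'m) dagcat \<Rightarrow> 'm gmap \<Rightarrow> 'm gmap \<Rightarrow> 'm gmap" where
  "gtensor K F G = (case F of (f, p, x) \<Rightarrow> case G of (g, q, y) \<Rightarrow>
      (dsum K f g, dsum K p q, col K x y))"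

definition gcopy :: "('o,'m) dagcat \<Rightarrow> 'o \<Rightarrow> 'o \<Rightarrow> 'm gmap" where
  "gcopy K X A = (col K (dId K A) (dId K A), dZero K (dBip K A A) (dBip K A A),
                  dZero K X (dBip K A A))"

definition gdel :: "('o,'m) dagcat \<Rightarrow> 'o \<Rightarrow> 'o \<Rightarrow> 'm gmap" where
  "gdel K X A = (dZero K A (dZob K), dZero K (dZob K) (dZob K), dZero K X (dZob K))"

definition glift :: "('o,'m) dagcat \<Rightarrow> 'o \<Rightarrow> 'm \<Rightarrow> 'm gmap" where
  "glift K X \<phi> = (\<phi>, dZero K (dCod K \<phi>) (dCod K \<phi>), dZero K X (dCod K \<phi>))"

text \<open>G : B \<otimes> A -> C is a conditional of F : A -> B \<otimes> C.  The monoidal coherence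
  isomorphisms (right unitor B \<oplus> 0 -> B and associator) are inserted explicitly.\<close>
definition gconditional ::
  "('o,'m) dagcat \<Rightarrow> 'o \<Rightarrow> 'o \<Rightarrow> 'o \<Rightarrow> 'o \<Rightarrow> 'm gmap \<Rightarrow> 'm gmap \<Rightarrow> bool" where
  "gconditional K X A B C F G \<longleftrightarrow>
     ghom K X (dBip K B A) C G \<and>
     gcomp K (gtensor K (gid K X B) G)
      (gcomp K (glift K X (assoc_map K B B A))
       (gcomp K (gtensor K (gcopy K X B) (gid K X A))
        (gcomp K (gtensor K (glift K X (dPr1 K B (dZob K))) (gid K X A))
         (gcomp K (gtensor K (gtensor K (gid K X B) (gdel K X C)) (gid K X A))
          (gcomp K (gtensor K F (gid K X A)) (gcopy K X A)))))) = F"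

definition cond_gen :: "('o,'m) dagcat \<Rightarrow> 'm \<Rightarrow> 'm \<Rightarrow> 'm \<Rightarrow> 'm \<Rightarrow> bool" where
  "cond_gen K \<alpha> \<beta> \<delta> m \<longleftrightarrow>
     m \<in> hom K (dCod K \<alpha>) (dCod K \<delta>) \<and>
     dCmp K m \<alpha> = dDag K \<beta> \<and>
     positive K (sub K \<delta> (dCmp K m \<beta>))"

definition gaussF :: "('o,'m) dagcat \<Rightarrow> 'm \<Rightarrow> 'm \<Rightarrow> 'm \<Rightarrow> 'm \<Rightarrow> 'm \<Rightarrow> 'm \<Rightarrow> 'm \<Rightarrow> 'm gmap" where
  "gaussF K f g \<alpha> \<beta> \<delta> s t = (col K f g, blk K \<alpha> \<beta> (dDag K \<beta>) \<delta>, col K s t)"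

definition gaussGm :: "('o,'m) dagcat \<Rightarrow> 'm \<Rightarrow> 'm \<Rightarrow> 'm \<Rightarrow> 'm \<Rightarrow> 'm \<Rightarrow> 'm \<Rightarrow> 'm \<Rightarrow> 'm gmap" where
  "gaussGm K f g \<beta> \<delta> s t m =
     (row K m (sub K g (dCmp K m f)), sub K \<delta> (dCmp K m \<beta>), sub K t (dCmp K m s))"

end

theory Submission
  imports Defs
begin

text \<open>Working in the matrix calculus of biproducts, the composite that defines a conditional
  of \<open>F\<close> evaluates, for \<open>G = ([m k], \<eta>, u)\<close>, to
  \<open>([f; m f + k], [\<alpha>, \<alpha> m\<dagger>; m \<alpha>, \<eta> + m \<alpha> m\<dagger>], [s; u + m s])\<close>.
  Comparing entries with \<open>F\<close> shows that \<open>G\<close> is a conditional iff \<open>\<eta>\<close> is positive,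
  \<open>k = g - m f\<close>, \<open>m \<alpha> = \<beta>\<dagger>\<close>, \<open>\<alpha> m\<dagger> = \<beta>\<close>, \<open>\<eta> = \<delta> - m \<beta>\<close> and \<open>u = t - m s\<close>.
  Since the covariance of \<open>F\<close> is positive, \<open>\<alpha>\<close> is self-adjoint, so \<open>\<alpha> m\<dagger> = \<beta>\<close> is the adjoint
  of \<open>m \<alpha> = \<beta>\<dagger>\<close>; what remains is exactly that \<open>m\<close> is a conditional generator and \<open>G = G\<^sub>m\<close>.\<close>

lemma hom_iff [simp]: "f \<in> hom K A B \<longleftrightarrow> dDom K f = A \<and> dCod K f = B"
  by (simp add: hom_def)

definition conditional_composite ::
  "('o,'m) dagcat \<Rightarrow> 'o \<Rightarrow> 'o \<Rightarrow> 'o \<Rightarrow> 'o \<Rightarrow> 'm gmap \<Rightarrow> 'm gmap \<Rightarrow> 'm gmap" where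
  "conditional_composite K X A B C F G =
     gcomp K (gtensor K (gid K X B) G)
      (gcomp K (glift K X (assoc_map K B B A))
       (gcomp K (gtensor K (gcopy K X B) (gid K X A))
        (gcomp K (gtensor K (glift K X (dPr1 K B (dZob K))) (gid K X A))
         (gcomp K (gtensor K (gtensor K (gid K X B) (gdel K X C)) (gid K X A))
          (gcomp K (gtensor K F (gid K X A)) (gcopy K X A))))))"

lemma gconditional_iff:
  "gconditional K X A B C F G \<longleftrightarrow>
     ghom K X (dBip K B A) C G \<and> conditional_composite K X A B C F G = F"
  by (simp add: gconditional_def conditional_composite_def)

context dagger_additive_cat
begin

lemma dom_cod_add [simp]:
  assumes "dDom K f = dDom K g" "dCod K f = dCod K g"
  shows "dDom K (dAdd K f g) = dDom K f" "dCod K (dAdd K f g) = dCod K f"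
  using add_hom[of f "dDom K f" "dCod K f" g] assms by auto

lemma dom_cod_neg [simp]: "dDom K (dNeg K f) = dDom K f" "dCod K (dNeg K f) = dCod K f"
  using neg_hom[of f "dDom K f" "dCod K f"] by auto

lemma dom_cod_zero [simp]: "dDom K (dZero K A B) = A" "dCod K (dZero K A B) = B"
  using zero_hom[of A B] by auto

lemma dom_cod_injections_projections [simp]:
  "dDom K (dIn1 K A B) = A" "dCod K (dIn1 K A B) = dBip K A B"
  "dDom K (dIn2 K A B) = B" "dCod K (dIn2 K A B) = dBip K A B"
  "dDom K (dPr1 K A B) = dBip K A B" "dCod K (dPr1 K A B) = A"
  "dDom K (dPr2 K A B) = dBip K A B" "dCod K (dPr2 K A B) = B"
  using in1_hom[of A B] in2_hom[of A B] pr1_hom[of A B] pr2_hom[of A B] by auto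

declare id_dom [simp] id_cod [simp] cmp_dom [simp] cmp_cod [simp]
  dag_dom [simp] dag_cod [simp] dag_invol [simp] dag_id [simp]

lemma dom_cod_sub [simp]:
  assumes "dDom K f = dDom K g" "dCod K f = dCod K g"
  shows "dDom K (sub K f g) = dDom K f" "dCod K (sub K f g) = dCod K f"
  using assms by (simp_all add: sub_def)

lemma dom_cod_col [simp]:
  assumes "dDom K x = dDom K y"
  shows "dDom K (col K x y) = dDom K x" "dCod K (col K x y) = dBip K (dCod K x) (dCod K y)"
  using assms by (simp_all add: col_def)

lemma dom_cod_row [simp]:
  assumes "dCod K x = dCod K y"
  shows "dDom K (row K x y) = dBip K (dDom K x) (dDom K y)" "dCod K (row K x y) = dCod K x"
  using assms by (simp_all add: row_def)

lemma cmp_id_left' [simp]: "dCod K f = A \<Longrightarrow> dCmp K (dId K A) f = f"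
  using id_left by auto

lemma cmp_id_right' [simp]: "dDom K f = A \<Longrightarrow> dCmp K f (dId K A) = f"
  using id_right by auto

lemma cmp_assoc' [simp]:
  "dDom K h = dCod K g \<Longrightarrow> dDom K g = dCod K f \<Longrightarrow>
   dCmp K (dCmp K h g) f = dCmp K h (dCmp K g f)"
  using cmp_assoc by auto

lemma add_zero_right [simp]: "dDom K f = A \<Longrightarrow> dCod K f = B \<Longrightarrow> dAdd K f (dZero K A B) = f"
  using add_zero by auto

lemma add_zero_left [simp]: "dDom K f = A \<Longrightarrow> dCod K f = B \<Longrightarrow> dAdd K (dZero K A B) f = f"
  using add_zero[of f A B] add_comm[of f A B "dZero K A B"] zero_hom by auto

lemma add_comm':
  "dDom K f = dDom K g \<Longrightarrow> dCod K f = dCod K g \<Longrightarrow> dAdd K f g = dAdd K g f"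
  using add_comm[of f "dDom K f" "dCod K f" g] by auto

lemma add_assoc':
  "dDom K f = dDom K g \<Longrightarrow> dCod K f = dCod K g \<Longrightarrow> dDom K h = dDom K g \<Longrightarrow> dCod K h = dCod K g \<Longrightarrow>
   dAdd K (dAdd K f g) h = dAdd K f (dAdd K g h)"
  using add_assoc[of f "dDom K f" "dCod K f" g h] by auto

lemma add_neg': "dDom K f = A \<Longrightarrow> dCod K f = B \<Longrightarrow> dAdd K f (dNeg K f) = dZero K A B"
  using add_neg by auto

lemma cmp_add_left' [simp]:
  "dDom K f = dDom K g \<Longrightarrow> dCod K f = dCod K g \<Longrightarrow> dDom K h = dCod K f \<Longrightarrow>
   dCmp K h (dAdd K f g) = dAdd K (dCmp K h f) (dCmp K h g)"
  using cmp_add_left[of f "dDom K f" "dCod K f" g h] by auto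

lemma cmp_add_right' [simp]:
  "dDom K f = dDom K g \<Longrightarrow> dCod K f = dCod K g \<Longrightarrow> dCod K h = dDom K f \<Longrightarrow>
   dCmp K (dAdd K f g) h = dAdd K (dCmp K f h) (dCmp K g h)"
  using cmp_add_right[of f "dDom K f" "dCod K f" g h] by auto

lemma dag_add' [simp]:
  "dDom K f = dDom K g \<Longrightarrow> dCod K f = dCod K g \<Longrightarrow>
   dDag K (dAdd K f g) = dAdd K (dDag K f) (dDag K g)"
  using dag_add[of f "dDom K f" "dCod K f" g] by auto

lemma dag_cmp' [simp]: "dDom K g = dCod K f \<Longrightarrow> dDag K (dCmp K g f) = dCmp K (dDag K f) (dDag K g)"
  using dag_cmp by auto

lemma add_idem_imp_zero:
  assumes "dDom K x = A" "dCod K x = B" "dAdd K x x = x"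
  shows "x = dZero K A B"
proof -
  have neg: "dAdd K x (dNeg K x) = dZero K A B"
    using assms by (simp add: add_neg')
  have "x = dAdd K x (dAdd K x (dNeg K x))"
    using assms by (simp only: neg add_zero_right)
  also have "\<dots> = dAdd K (dAdd K x x) (dNeg K x)"
    using assms(1,2) by (simp add: add_assoc')
  also have "\<dots> = dZero K A B"
    using assms neg by simp
  finally show ?thesis .
qed

lemma cmp_zero_right [simp]:
  assumes "dDom K h = B"
  shows "dCmp K h (dZero K A B) = dZero K A (dCod K h)"
proof (rule add_idem_imp_zero)
  show "dAdd K (dCmp K h (dZero K A B)) (dCmp K h (dZero K A B)) = dCmp K h (dZero K A B)"
    using assms cmp_add_left'[of "dZero K A B" "dZero K A B" h] by simp
qed (use assms in simp_all)

lemma cmp_zero_left [simp]: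
  assumes "dCod K h = A"
  shows "dCmp K (dZero K A B) h = dZero K (dDom K h) B"
proof (rule add_idem_imp_zero)
  show "dAdd K (dCmp K (dZero K A B) h) (dCmp K (dZero K A B) h) = dCmp K (dZero K A B) h"
    using assms cmp_add_right'[of "dZero K A B" "dZero K A B" h] by simp
qed (use assms in simp_all)

lemma dag_zero [simp]: "dDag K (dZero K A B) = dZero K B A"
proof (rule add_idem_imp_zero)
  show "dAdd K (dDag K (dZero K A B)) (dDag K (dZero K A B)) = dDag K (dZero K A B)"
    using dag_add'[of "dZero K A B" "dZero K A B"] by simp
qed simp_all

lemma add_eq_imp_eq_sub:
  assumes "dAdd K a k = g" "dDom K a = dDom K k" "dCod K a = dCod K k"
  shows "k = sub K g a"
proof -
  have "sub K g a = dAdd K (dAdd K k a) (dNeg K a)"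
    using assms by (simp add: sub_def add_comm')
  also have "\<dots> = dAdd K k (dAdd K a (dNeg K a))"
    using assms by (simp add: add_assoc')
  also have "\<dots> = k"
    using assms by (simp add: add_neg')
  finally show ?thesis by simp
qed

lemma sub_add_cancel:
  assumes "dDom K a = dDom K g" "dCod K a = dCod K g"
  shows "dAdd K (sub K g a) a = g"
proof -
  have "dAdd K (sub K g a) a = dAdd K g (dAdd K (dNeg K a) a)"
    using assms by (simp add: sub_def add_assoc')
  also have "\<dots> = g"
    using assms by (simp add: add_neg' add_comm'[of "dNeg K a" a])
  finally show ?thesis .
qed

lemma add_sub_cancel:
  assumes "dDom K a = dDom K g" "dCod K a = dCod K g"
  shows "dAdd K a (sub K g a) = g"
  using sub_add_cancel[OF assms] assms add_comm'[of a "sub K g a"] by simp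

lemma dag_in1 [simp]: "dDag K (dIn1 K A B) = dPr1 K A B"
  by (metis dag_pr1 dag_invol)

lemma dag_in2 [simp]: "dDag K (dIn2 K A B) = dPr2 K A B"
  by (metis dag_pr2 dag_invol)

declare dag_pr1 [simp] dag_pr2 [simp] pr1_in1 [simp] pr2_in2 [simp] pr1_in2 [simp] pr2_in1 [simp]

lemma positive_self_adjoint: "positive K p \<Longrightarrow> dDag K p = p"
  unfolding positive_def by auto

lemma in1_eq_col: "dIn1 K P Q = col K (dId K P) (dZero K P Q)"
  by (simp add: col_def)

lemma in2_eq_col: "dIn2 K P Q = col K (dZero K Q P) (dId K Q)"
  by (simp add: col_def)

lemma pr1_eq_row: "dPr1 K P Q = row K (dId K P) (dZero K Q P)"
  by (simp add: row_def)

lemma pr2_eq_row: "dPr2 K P Q = row K (dZero K P Q) (dId K Q)"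
  by (simp add: row_def)

lemma zero_from_bip_eq_row: "dZero K (dBip K P Q) R = row K (dZero K P R) (dZero K Q R)"
  by (simp add: row_def)

lemma zero_to_bip_eq_col: "dZero K R (dBip K P Q) = col K (dZero K R P) (dZero K R Q)"
  by (simp add: col_def)

lemma id_bip_eq_col: "dId K (dBip K P Q) = col K (dPr1 K P Q) (dPr2 K P Q)"
  by (simp add: col_def in_pr_sum)

lemma dsum_eq_col:
  "dsum K f g = col K (row K f (dZero K (dDom K g) (dCod K f))) (row K (dZero K (dDom K f) (dCod K g)) g)"
  by (simp add: dsum_def col_def row_def)

lemma col_cmp:
  "dDom K x = dDom K y \<Longrightarrow> dCod K h = dDom K x \<Longrightarrow>
   dCmp K (col K x y) h = col K (dCmp K x h) (dCmp K y h)"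
  by (simp add: col_def)

lemma cmp_row:
  "dCod K m = dCod K k \<Longrightarrow> dDom K h = dCod K m \<Longrightarrow>
   dCmp K h (row K m k) = row K (dCmp K h m) (dCmp K h k)"
  by (simp add: row_def)

lemma pr1_col:
  "dDom K x = dDom K y \<Longrightarrow> dCod K x = P \<Longrightarrow> dCod K y = Q \<Longrightarrow> dCmp K (dPr1 K P Q) (col K x y) = x"
  by (auto simp add: col_def cmp_assoc simp del: cmp_assoc')

lemma pr2_col:
  "dDom K x = dDom K y \<Longrightarrow> dCod K x = P \<Longrightarrow> dCod K y = Q \<Longrightarrow> dCmp K (dPr2 K P Q) (col K x y) = y"
  by (auto simp add: col_def cmp_assoc simp del: cmp_assoc')

lemma row_in1:
  "dCod K x = dCod K y \<Longrightarrow> dDom K x = P \<Longrightarrow> dDom K y = Q \<Longrightarrow> dCmp K (row K x y) (dIn1 K P Q) = x"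
  by (auto simp add: row_def)

lemma row_in2:
  "dCod K x = dCod K y \<Longrightarrow> dDom K x = P \<Longrightarrow> dDom K y = Q \<Longrightarrow> dCmp K (row K x y) (dIn2 K P Q) = y"
  by (auto simp add: row_def)

lemma row_cmp_col:
  assumes "dCod K m = dCod K k" "dDom K x = dDom K y" "dDom K m = dCod K x" "dDom K k = dCod K y"
  shows "dCmp K (row K m k) (col K x y) = dAdd K (dCmp K m x) (dCmp K k y)"
proof -
  have "dCmp K (row K m k) (col K x y) =
      dAdd K (dCmp K (dCmp K (row K m k) (dIn1 K (dDom K m) (dDom K k))) x)
             (dCmp K (dCmp K (row K m k) (dIn2 K (dDom K m) (dDom K k))) y)"
    using assms by (simp add: col_def)
  then show ?thesis
    using assms by (simp add: row_in1 row_in2)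
qed

lemma col_eta:
  assumes "dCod K h = dBip K P Q"
  shows "col K (dCmp K (dPr1 K P Q) h) (dCmp K (dPr2 K P Q) h) = h"
proof -
  have "col K (dCmp K (dPr1 K P Q) h) (dCmp K (dPr2 K P Q) h) =
      dCmp K (dAdd K (dCmp K (dIn1 K P Q) (dPr1 K P Q)) (dCmp K (dIn2 K P Q) (dPr2 K P Q))) h"
    using assms by (simp add: col_def)
  then show ?thesis
    using assms by (simp add: in_pr_sum)
qed

lemma row_eta: "dDom K h = dBip K P Q \<Longrightarrow> row K (dCmp K h (dIn1 K P Q)) (dCmp K h (dIn2 K P Q)) = h"
  by (simp add: row_def in_pr_sum flip: cmp_add_left')

lemma col_eq_iff:
  "dDom K x = dDom K y \<Longrightarrow> dDom K x' = dDom K y' \<Longrightarrow> dCod K x = dCod K x' \<Longrightarrow> dCod K y = dCod K y' \<Longrightarrow>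
   col K x y = col K x' y' \<longleftrightarrow> x = x' \<and> y = y'"
  by (metis pr1_col pr2_col)

lemma row_eq_iff:
  "dCod K x = dCod K y \<Longrightarrow> dCod K x' = dCod K y' \<Longrightarrow> dDom K x = dDom K x' \<Longrightarrow> dDom K y = dDom K y' \<Longrightarrow>
   row K x y = row K x' y' \<longleftrightarrow> x = x' \<and> y = y'"
  by (metis row_in1 row_in2)

lemma col_unique:
  "dCod K h = dBip K P Q \<Longrightarrow> dCmp K (dPr1 K P Q) h = a \<Longrightarrow> dCmp K (dPr2 K P Q) h = b \<Longrightarrow> h = col K a b"
  using col_eta by metis

lemma row_unique:
  "dDom K h = dBip K P Q \<Longrightarrow> dCmp K h (dIn1 K P Q) = a \<Longrightarrow> dCmp K h (dIn2 K P Q) = b \<Longrightarrow> h = row K a b"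
  using row_eta by metis

lemma add_col:
  "dDom K x = dDom K y \<Longrightarrow> dDom K x' = dDom K x \<Longrightarrow> dDom K y' = dDom K x \<Longrightarrow>
   dCod K x' = dCod K x \<Longrightarrow> dCod K y' = dCod K y \<Longrightarrow>
   dAdd K (col K x y) (col K x' y') = col K (dAdd K x x') (dAdd K y y')"
  by (rule col_unique[where P="dCod K x" and Q="dCod K y"]) (simp_all add: pr1_col pr2_col)

lemma add_row:
  "dCod K x = dCod K y \<Longrightarrow> dCod K x' = dCod K x \<Longrightarrow> dCod K y' = dCod K x \<Longrightarrow>
   dDom K x' = dDom K x \<Longrightarrow> dDom K y' = dDom K y \<Longrightarrow>
   dAdd K (row K x y) (row K x' y') = row K (dAdd K x x') (dAdd K y y')"
  by (rule row_unique[where P="dDom K x" and Q="dDom K y"]) (simp_all add: row_in1 row_in2)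

lemma dag_col: "dDom K x = dDom K y \<Longrightarrow> dDag K (col K x y) = row K (dDag K x) (dDag K y)"
  by (simp add: col_def row_def)

lemma dag_row: "dCod K x = dCod K y \<Longrightarrow> dDag K (row K x y) = col K (dDag K x) (dDag K y)"
  by (simp add: col_def row_def)

lemma row_of_cols_eq_col_of_rows:
  "dCod K a = dCod K b \<Longrightarrow> dCod K c = dCod K d \<Longrightarrow> dDom K a = dDom K c \<Longrightarrow> dDom K b = dDom K d \<Longrightarrow>
   row K (col K a c) (col K b d) = col K (row K a b) (row K c d)"
  by (rule col_unique[where P="dCod K a" and Q="dCod K c"]) (simp_all add: pr1_col pr2_col cmp_row)

lemma dag_blk:
  assumes "dCod K a = dCod K b" "dCod K c = dCod K d" "dDom K a = dDom K c" "dDom K b = dDom K d"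
  shows "dDag K (blk K a b c d) = blk K (dDag K a) (dDag K c) (dDag K b) (dDag K d)"
  using assms by (simp add: blk_def dag_col dag_row row_of_cols_eq_col_of_rows)

lemma blk_eq_iff:
  assumes "dCod K a = dCod K b" "dCod K c = dCod K d" "dDom K a = dDom K c" "dDom K b = dDom K d"
    and "dCod K a' = dCod K b'" "dCod K c' = dCod K d'" "dDom K a' = dDom K c'" "dDom K b' = dDom K d'"
    and "dDom K a = dDom K a'" "dDom K b = dDom K b'" "dCod K a = dCod K a'" "dCod K c = dCod K c'"
  shows "blk K a b c d = blk K a' b' c' d' \<longleftrightarrow> a = a' \<and> b = b' \<and> c = c' \<and> d = d'"
  using assms by (simp add: blk_def col_eq_iff row_eq_iff)

lemma positive_blk_self_adjoint:
  assumes "\<alpha> \<in> hom K B B" "\<beta> \<in> hom K C B" "\<delta> \<in> hom K C C"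
    and "positive K (blk K \<alpha> \<beta> (dDag K \<beta>) \<delta>)"
  shows "dDag K \<alpha> = \<alpha>"
proof -
  have "blk K (dDag K \<alpha>) \<beta> (dDag K \<beta>) (dDag K \<delta>) = blk K \<alpha> \<beta> (dDag K \<beta>) \<delta>"
    using positive_self_adjoint[OF assms(4)] assms(1-3) by (simp add: dag_blk)
  then show ?thesis
    using assms(1-3) by (simp add: blk_eq_iff)
qed

lemma conditional_composite_gaussF_row:
  assumes "f \<in> hom K A B" "g \<in> hom K A C"
    and "\<alpha> \<in> hom K B B" "\<beta> \<in> hom K C B" "\<delta> \<in> hom K C C"
    and "s \<in> hom K X B" "t \<in> hom K X C"
    and "m \<in> hom K B C" "k \<in> hom K A C" "\<eta> \<in> hom K C C" "u \<in> hom K X C"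
  shows "conditional_composite K X A B C (gaussF K f g \<alpha> \<beta> \<delta> s t) (row K m k, \<eta>, u) =
    (col K f (dAdd K (dCmp K m f) k),
     blk K \<alpha> (dCmp K \<alpha> (dDag K m)) (dCmp K m \<alpha>) (dAdd K \<eta> (dCmp K m (dCmp K \<alpha> (dDag K m)))),
     col K s (dAdd K u (dCmp K m s)))"
  using assms
  by (simp add: conditional_composite_def gcomp_def gtensor_def gid_def gcopy_def gdel_def glift_def
      assoc_map_def gaussF_def blk_def dsum_eq_col in1_eq_col in2_eq_col pr1_eq_row pr2_eq_row
      id_bip_eq_col zero_from_bip_eq_row zero_to_bip_eq_col col_cmp cmp_row row_cmp_col dag_col dag_row
      add_col add_row row_of_cols_eq_col_of_rows zero_obj)

lemma gconditional_gaussF_row_iff: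
  assumes "f \<in> hom K A B" "g \<in> hom K A C"
    and "\<alpha> \<in> hom K B B" "\<beta> \<in> hom K C B" "\<delta> \<in> hom K C C"
    and "s \<in> hom K X B" "t \<in> hom K X C"
    and "m \<in> hom K B C" "k \<in> hom K A C" "\<eta> \<in> hom K C C" "u \<in> hom K X C"
  shows "gconditional K X A B C (gaussF K f g \<alpha> \<beta> \<delta> s t) (row K m k, \<eta>, u) \<longleftrightarrow>
    positive K \<eta> \<and> dAdd K (dCmp K m f) k = g \<and> dCmp K \<alpha> (dDag K m) = \<beta> \<and> dCmp K m \<alpha> = dDag K \<beta> \<and>
    dAdd K \<eta> (dCmp K m \<beta>) = \<delta> \<and> dAdd K u (dCmp K m s) = t"
proof -
  have "gconditional K X A B C (gaussF K f g \<alpha> \<beta> \<delta> s t) (row K m k, \<eta>, u) \<longleftrightarrow>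
    positive K \<eta> \<and> col K f (dAdd K (dCmp K m f) k) = col K f g \<and>
    blk K \<alpha> (dCmp K \<alpha> (dDag K m)) (dCmp K m \<alpha>) (dAdd K \<eta> (dCmp K m (dCmp K \<alpha> (dDag K m)))) =
      blk K \<alpha> \<beta> (dDag K \<beta>) \<delta> \<and>
    col K s (dAdd K u (dCmp K m s)) = col K s t"
    unfolding gconditional_iff conditional_composite_gaussF_row[OF assms]
    using assms by (simp add: ghom_def gaussF_def)
  also have "\<dots> \<longleftrightarrow> positive K \<eta> \<and> dAdd K (dCmp K m f) k = g \<and>
    dCmp K \<alpha> (dDag K m) = \<beta> \<and> dCmp K m \<alpha> = dDag K \<beta> \<and>
    dAdd K \<eta> (dCmp K m (dCmp K \<alpha> (dDag K m))) = \<delta> \<and> dAdd K u (dCmp K m s) = t"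
    using assms by (simp add: col_eq_iff blk_eq_iff)
  finally show ?thesis
    by auto
qed

lemma gconditional_row_imp_cond_gen:
  assumes hom: "f \<in> hom K A B" "g \<in> hom K A C"
    "\<alpha> \<in> hom K B B" "\<beta> \<in> hom K C B" "\<delta> \<in> hom K C C"
    "s \<in> hom K X B" "t \<in> hom K X C"
    "m \<in> hom K B C" "k \<in> hom K A C" "\<eta> \<in> hom K C C" "u \<in> hom K X C"
    and "gconditional K X A B C (gaussF K f g \<alpha> \<beta> \<delta> s t) (row K m k, \<eta>, u)"
  shows "cond_gen K \<alpha> \<beta> \<delta> m \<and> (row K m k, \<eta>, u) = gaussGm K f g \<beta> \<delta> s t m"
proof -
  have pos: "positive K \<eta>" and m_\<alpha>: "dCmp K m \<alpha> = dDag K \<beta>"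
    and k: "dAdd K (dCmp K m f) k = g"
    and \<eta>: "dAdd K \<eta> (dCmp K m \<beta>) = \<delta>" and u: "dAdd K u (dCmp K m s) = t"
    using assms by (simp_all add: gconditional_gaussF_row_iff[OF hom])
  have "k = sub K g (dCmp K m f)"
    using k hom by (intro add_eq_imp_eq_sub) auto
  moreover have "\<eta> = sub K \<delta> (dCmp K m \<beta>)"
    using \<eta> hom by (intro add_eq_imp_eq_sub) (auto simp: add_comm')
  moreover have "u = sub K t (dCmp K m s)"
    using u hom by (intro add_eq_imp_eq_sub) (auto simp: add_comm')
  ultimately show ?thesis
    using hom m_\<alpha> pos by (simp add: cond_gen_def gaussGm_def)
qed

lemma cond_gen_imp_gconditional_gaussGm:
  assumes hom: "f \<in> hom K A B" "g \<in> hom K A C"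
    "\<alpha> \<in> hom K B B" "\<beta> \<in> hom K C B" "\<delta> \<in> hom K C C"
    "s \<in> hom K X B" "t \<in> hom K X C"
    and self_adjoint: "dDag K \<alpha> = \<alpha>"
    and "cond_gen K \<alpha> \<beta> \<delta> m"
  shows "gconditional K X A B C (gaussF K f g \<alpha> \<beta> \<delta> s t) (gaussGm K f g \<beta> \<delta> s t m) \<and>
    dCmp K (fst (gaussGm K f g \<beta> \<delta> s t m)) (dIn1 K B A) = m"
proof -
  have m: "m \<in> hom K B C" and m_\<alpha>: "dCmp K m \<alpha> = dDag K \<beta>"
    and pos: "positive K (sub K \<delta> (dCmp K m \<beta>))"
    using assms by (auto simp: cond_gen_def)
  have "dCmp K \<alpha> (dDag K m) = \<beta>"
    using arg_cong[OF m_\<alpha>, of "dDag K"] m hom self_adjoint by simp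
  then show ?thesis
    using hom m m_\<alpha> pos
    by (simp add: gaussGm_def gconditional_gaussF_row_iff add_sub_cancel sub_add_cancel row_in1)
qed

lemma gconditional_eq_gaussGm:
  assumes hom: "f \<in> hom K A B" "g \<in> hom K A C"
    "\<alpha> \<in> hom K B B" "\<beta> \<in> hom K C B" "\<delta> \<in> hom K C C"
    "s \<in> hom K X B" "t \<in> hom K X C"
    and conditional: "gconditional K X A B C (gaussF K f g \<alpha> \<beta> \<delta> s t) G"
  defines "m \<equiv> dCmp K (fst G) (dIn1 K B A)"
  shows "cond_gen K \<alpha> \<beta> \<delta> m \<and> G = gaussGm K f g \<beta> \<delta> s t m"
proof -
  obtain h \<eta> u where G: "G = (h, \<eta>, u)"
    by (cases G) auto
  have hom_G: "h \<in> hom K (dBip K B A) C" "\<eta> \<in> hom K C C" "u \<in> hom K X C"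
    using conditional by (simp_all add: G gconditional_iff ghom_def)
  have h: "h = row K m (dCmp K h (dIn2 K B A))"
    using hom_G row_eta[of h B A] by (simp add: m_def G)
  have "gconditional K X A B C (gaussF K f g \<alpha> \<beta> \<delta> s t) (row K m (dCmp K h (dIn2 K B A)), \<eta>, u)"
    unfolding h[symmetric] G[symmetric] by (fact conditional)
  then have "cond_gen K \<alpha> \<beta> \<delta> m \<and>
      (row K m (dCmp K h (dIn2 K B A)), \<eta>, u) = gaussGm K f g \<beta> \<delta> s t m"
    using hom_G by (intro gconditional_row_imp_cond_gen[OF hom]) (simp_all add: m_def G)
  then show ?thesis
    unfolding h[symmetric] G[symmetric] .
qed

end

theorem mainTheorem8:
  fixes K :: "('o,'m) dagcat" and X A B C :: 'o
    and f g \<alpha> \<beta> \<delta> s t :: 'm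
  assumes "dagger_additive_cat K"
    and "f \<in> hom K A B" and "g \<in> hom K A C"
    and "\<alpha> \<in> hom K B B" and "\<beta> \<in> hom K C B" and "\<delta> \<in> hom K C C"
    and "s \<in> hom K X B" and "t \<in> hom K X C"
    and "positive K (blk K \<alpha> \<beta> (dDag K \<beta>) \<delta>)"
  shows
    "(\<forall>m k \<eta> u. m \<in> hom K B C \<and> k \<in> hom K A C \<and> \<eta> \<in> hom K C C \<and> u \<in> hom K X C \<and>
        gconditional K X A B C (gaussF K f g \<alpha> \<beta> \<delta> s t) (row K m k, \<eta>, u)
        \<longrightarrow> cond_gen K \<alpha> \<beta> \<delta> m \<and> (row K m k, \<eta>, u) = gaussGm K f g \<beta> \<delta> s t m)
   \<and> (\<forall>m. cond_gen K \<alpha> \<beta> \<delta> m \<longrightarrow>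
        gconditional K X A B C (gaussF K f g \<alpha> \<beta> \<delta> s t) (gaussGm K f g \<beta> \<delta> s t m)
        \<and> dCmp K (fst (gaussGm K f g \<beta> \<delta> s t m)) (dIn1 K B A) = m)
   \<and> bij_betw (\<lambda>G. dCmp K (fst G) (dIn1 K B A))
        {G. gconditional K X A B C (gaussF K f g \<alpha> \<beta> \<delta> s t) G}
        {m. cond_gen K \<alpha> \<beta> \<delta> m}"
proof -
  interpret dagger_additive_cat K by (fact assms(1))
  note hom = assms(2-8)
  have self_adjoint: "dDag K \<alpha> = \<alpha>"
    using positive_blk_self_adjoint assms(4-6,9) by blast
  note to_generator = cond_gen_imp_gconditional_gaussGm[OF hom self_adjoint]
  have "bij_betw (\<lambda>G. dCmp K (fst G) (dIn1 K B A))
      {G. gconditional K X A B C (gaussF K f g \<alpha> \<beta> \<delta> s t) G} {m. cond_gen K \<alpha> \<beta> \<delta> m}"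
    by (rule bij_betw_byWitness[where f'="gaussGm K f g \<beta> \<delta> s t"])
      (auto dest: gconditional_eq_gaussGm[OF hom] to_generator)
  then show ?thesis
    using gconditional_row_imp_cond_gen[OF hom] to_generator by blast
qed

end
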